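(* Let $G$ be a group, $H$ a finite index normal subgroup of $G$, $K$ a normal subgroup of $G$, and $g\in H$. If $\nu(g;G,K)$ is infinite, then $\nu(g;H,H\cap K)$ is infinite.
   Context: For a group $G$, a normal subgroup $K$ and $g\in G$, with $\psi:G\to G/K$ the quotient map: if $g\in K$, $\nu(g;G,K)$ is the supremum of $o(\psi(a),G/K)$ (order of $\psi(a)$) over all $a\in G$ such that $a^n=g$ for some integer $n$; if $g\notin K$, $\nu(g;G,K)$ is the supremum of all non-zero integers $n$ for which $g=a^n$ for some $a\in G$. $\nu(g;G,K)$ is infinite if the relevant set is unbounded. The same definition applies to $\nu(g;H,H\cap K)$ within the group $H$ and its normal subgroup $H\cap K$. *)

theory Defs
  imports "HOL-Algebra.Algebra" "HOL-Library.Extended_Real"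
begin

text \<open>Order of an element of a group, as an extended real: infinite order is \<infinity>.
  (group.ord returns 0 for elements of infinite order.)\<close>
definition elem_order :: "('a, 'b) monoid_scheme \<Rightarrow> 'a \<Rightarrow> ereal" where
  "elem_order G x = (if group.ord G x = 0 then \<infinity> else ereal (real (group.ord G x)))"

definition nu :: "('a, 'b) monoid_scheme \<Rightarrow> 'a set \<Rightarrow> 'a \<Rightarrow> ereal" where
  "nu G K g =
     (if g \<in> K then
        Sup {elem_order (G Mod K) (K #>\<^bsub>G\<^esub> a) | a. a \<in> carrier G \<and> (\<exists>n::int. a [^]\<^bsub>G\<^esub> n = g)}
      else
        Sup {ereal (real_of_int n) | n::int. n \<noteq> 0 \<and> (\<exists>a \<in> carrier G. g = a [^]\<^bsub>G\<^esub> n)})"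

end

theory Submission
  imports Defs
begin

text \<open>Let \<open>n\<close> be the index of \<open>H\<close>. If \<open>a\<^sup>m = g \<in> H\<close>, the order \<open>d\<close> of \<open>aH\<close> in \<open>G/H\<close> is at
  most \<open>n\<close> and divides \<open>m\<close>, so \<open>b = a\<^sup>d \<in> H\<close> is a root of \<open>g\<close> in \<open>H\<close> of exponent
  \<open>m/d \<ge> m/n\<close>. Moreover the order of \<open>aK\<close> divides \<open>d\<close> times the order of \<open>bK\<close>, which
  equals the order of \<open>b(H \<inter> K)\<close> in \<open>H/(H \<inter> K)\<close>. So in either case of the definition
  of \<open>\<nu>\<close>, every value attained in \<open>G\<close> is at most \<open>n\<close> times a value attained in \<open>H\<close>.\<close>

lemma Sup_ereal_eq_PInfty_if_dominated:
  fixes A B :: "ereal set" and c :: real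
  assumes "Sup A = \<infinity>" and "0 < c"
    and "\<And>x. x \<in> A \<Longrightarrow> 0 < x \<Longrightarrow> \<exists>y\<in>B. x \<le> ereal c * y"
  shows "Sup B = \<infinity>"
  unfolding top_ereal_def[symmetric] Sup_eq_top_iff
proof (intro allI impI)
  fix r :: ereal
  assume "r < Orderings.top"
  then have "max 0 (ereal c * r) < Orderings.top"
    using \<open>0 < c\<close> by (cases r) (auto simp: top_ereal_def max_def)
  then obtain x where "x \<in> A" "max 0 (ereal c * r) < x"
    using assms(1) unfolding top_ereal_def[symmetric] Sup_eq_top_iff by blast
  then obtain y where "y \<in> B" "x \<le> ereal c * y"
    using assms(3) by auto
  with \<open>max 0 (ereal c * r) < x\<close> have "ereal c * r < ereal c * y"
    by (meson less_le_trans max.strict_boundedE)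
  with \<open>0 < c\<close> have "r < y"
    by (metis ereal_less(2) ereal_mult_less_right less_ereal.simps(4) mult.commute)
  with \<open>y \<in> B\<close> show "\<exists>y\<in>B. r < y" by blast
qed

lemma (in group) ord_dvd_mult_ord_pow:
  assumes "x \<in> carrier G"
  shows "ord x dvd k * ord (x [^] k)"
  by (metis assms pow_ord_eq_1 pow_eq_id nat_pow_closed nat_pow_pow)

lemma (in group) elem_order_le_mult_elem_order_pow:
  assumes "x \<in> carrier G" and "0 < k"
  shows "elem_order G x \<le> ereal (real k) * elem_order G (x [^] k)"
proof (cases "ord (x [^] k) = 0")
  case True
  then show ?thesis using \<open>0 < k\<close> by (simp add: elem_order_def)
next
  case False
  then have "ord x \<le> k * ord (x [^] k)"
    using ord_dvd_mult_ord_pow[OF assms(1)] \<open>0 < k\<close> by (simp add: dvd_imp_le)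
  moreover have "ord x \<noteq> 0"
    using ord_dvd_mult_ord_pow[OF assms(1), of k] False \<open>0 < k\<close>
    by (metis dvd_0_left_iff mult_is_0 not_gr0)
  ultimately show ?thesis
    using False by (simp add: elem_order_def flip: of_nat_mult)
qed

lemma (in group) rcos_eq_self_iff:
  assumes "subgroup N G" and "x \<in> carrier G"
  shows "N #> x = N \<longleftrightarrow> x \<in> N"
  using assms coset_join1 coset_join2 by blast

lemma (in normal) ord_FactGroup_dvd_iff:
  assumes "a \<in> carrier G"
  shows "group.ord (G Mod H) (H #> a) dvd n \<longleftrightarrow> a [^] (n::nat) \<in> H"
  using group.pow_eq_id[OF factorgroup_is_group hom_in_carrier[OF r_coset_hom_Mod assms], of n] assms
  by (simp add: FactGroup_pow rcos_eq_self_iff[OF subgroup_axioms])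

lemma (in normal) ord_FactGroup_int_dvd_iff:
  assumes "a \<in> carrier G"
  shows "int (group.ord (G Mod H) (H #> a)) dvd n \<longleftrightarrow> a [^] (n::int) \<in> H"
  using group.int_pow_eq_id[OF factorgroup_is_group hom_in_carrier[OF r_coset_hom_Mod assms], of n] assms
  by (simp add: FactGroup_int_pow rcos_eq_self_iff[OF subgroup_axioms])

lemma (in group) ord_FactGroup_Int_subgroup:
  assumes "subgroup H G" and "K \<lhd> G" and "b \<in> H"
  shows "group.ord (G\<lparr>carrier := H\<rparr> Mod (H \<inter> K)) ((H \<inter> K) #>\<^bsub>G\<lparr>carrier := H\<rparr>\<^esub> b)
       = group.ord (G Mod K) (K #> b)"
proof -
  have "normal (H \<inter> K) (G\<lparr>carrier := H\<rparr>)"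
    unfolding Int_commute[of H K] using normal_Int_subgroup[OF assms(1,2)] .
  moreover have "b [^] n \<in> H" for n :: nat
    using subgroup_int_pow_closed[OF assms(1,3), of "int n"] by (simp add: int_pow_int)
  moreover note subgroup.mem_carrier[OF assms(1,3)]
  ultimately have "group.ord (G\<lparr>carrier := H\<rparr> Mod (H \<inter> K)) ((H \<inter> K) #>\<^bsub>G\<lparr>carrier := H\<rparr>\<^esub> b) dvd n
      \<longleftrightarrow> group.ord (G Mod K) (K #> b) dvd n" for n
    using normal.ord_FactGroup_dvd_iff[of "H \<inter> K" "G\<lparr>carrier := H\<rparr>" b n]
      normal.ord_FactGroup_dvd_iff[OF assms(2), of b n] assms(3)
    by (simp add: nat_pow_consistent[symmetric])
  then show ?thesis by (meson dvd_antisym dvd_refl)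
qed

lemma (in normal) card_rcosets_pos:
  assumes "finite (rcosets H)"
  shows "0 < card (rcosets H)"
proof -
  have "H \<in> rcosets H" by (metis coset_mult_one one_closed rcosetsI subset)
  then show ?thesis using assms by (auto simp: card_gt_0_iff)
qed

lemma (in normal) root_in_finite_index_normal_subgroup:
  assumes "finite (rcosets H)" and "a \<in> carrier G" and "a [^] (m::int) = g" and "g \<in> H"
  obtains d :: nat and k :: int
  where "0 < d" "d \<le> card (rcosets H)" "a [^] d \<in> H" "m = int d * k" "(a [^] d) [^] k = g"
proof -
  interpret Q: group "G Mod H" by (rule factorgroup_is_group)
  define d where "d = Q.ord (H #> a)"
  have aH: "H #> a \<in> carrier (G Mod H)" using hom_in_carrier[OF r_coset_hom_Mod assms(2)] .
  have fin: "finite (carrier (G Mod H))" using assms(1) by (simp add: FactGroup_def)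
  have "order (G Mod H) = card (rcosets H)" by (simp add: order_def FactGroup_def)
  then have "d \<le> card (rcosets H)" unfolding d_def using Q.ord_le_group_order[OF fin aH] by simp
  moreover have "0 < d" unfolding d_def using Q.ord_ge_1[OF fin aH] by simp
  moreover have "a [^] d \<in> H" using ord_FactGroup_dvd_iff[OF assms(2), of d] unfolding d_def by simp
  moreover have "int d dvd m"
    using ord_FactGroup_int_dvd_iff[OF assms(2), of m] assms(3,4) unfolding d_def by simp
  then obtain k where "m = int d * k" by (rule dvdE)
  moreover have "(a [^] d) [^] k = a [^] (int d * k)"
    using int_pow_pow[OF assms(2), of "int d" k] by (simp add: int_pow_int)
  ultimately show thesis using that assms(3) by simp
qed

lemma (in normal) Sup_root_exponents_in_subgroup:
  assumes "finite (rcosets H)" and "g \<in> H"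
    and "Sup {ereal (real_of_int n) | n::int. n \<noteq> 0 \<and> (\<exists>a\<in>carrier G. g = a [^] n)} = \<infinity>"
  shows "Sup {ereal (real_of_int n) | n::int. n \<noteq> 0 \<and> (\<exists>a\<in>H. g = a [^]\<^bsub>G\<lparr>carrier := H\<rparr>\<^esub> n)} = \<infinity>"
proof (rule Sup_ereal_eq_PInfty_if_dominated[OF assms(3)])
  show "0 < real (card (rcosets H))" using card_rcosets_pos[OF assms(1)] by simp
  fix x
  assume "x \<in> {ereal (real_of_int n) | n::int. n \<noteq> 0 \<and> (\<exists>a\<in>carrier G. g = a [^] n)}" "0 < x"
  then obtain a m where a: "a \<in> carrier G" "a [^] m = g"
    and x: "x = ereal (real_of_int m)" "0 < m"
    by auto
  obtain d k where d: "0 < d" "d \<le> card (rcosets H)" "a [^] d \<in> H" "m = int d * k"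
    and root: "(a [^] d) [^] k = g"
    using root_in_finite_index_normal_subgroup[OF assms(1) a assms(2)] by blast
  have "0 < k" using d(1,4) x(2) by (simp add: zero_less_mult_iff)
  have "real_of_int m = real d * real_of_int k" using d(4) by simp
  also have "\<dots> \<le> real (card (rcosets H)) * real_of_int k"
    using d(2) \<open>0 < k\<close> by (intro mult_right_mono) auto
  finally have "x \<le> ereal (real (card (rcosets H))) * ereal (real_of_int k)"
    using x(1) by simp
  moreover have "g = (a [^] d) [^]\<^bsub>G\<lparr>carrier := H\<rparr>\<^esub> k"
    using int_pow_consistent[OF subgroup_axioms d(3)] root by simp
  then have "ereal (real_of_int k)
      \<in> {ereal (real_of_int n) | n::int. n \<noteq> 0 \<and> (\<exists>a\<in>H. g = a [^]\<^bsub>G\<lparr>carrier := H\<rparr>\<^esub> n)}"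
    using \<open>0 < k\<close> d(3) by blast
  ultimately show "\<exists>y\<in>{ereal (real_of_int n) | n::int. n \<noteq> 0 \<and> (\<exists>a\<in>H. g = a [^]\<^bsub>G\<lparr>carrier := H\<rparr>\<^esub> n)}.
      x \<le> ereal (real (card (rcosets H))) * y"
    by blast
qed

lemma (in normal) Sup_root_orders_in_subgroup:
  assumes "finite (rcosets H)" and "K \<lhd> G" and "g \<in> H"
    and "Sup {elem_order (G Mod K) (K #> a) | a. a \<in> carrier G \<and> (\<exists>n::int. a [^] n = g)} = \<infinity>"
  shows "Sup {elem_order (G\<lparr>carrier := H\<rparr> Mod (H \<inter> K)) ((H \<inter> K) #>\<^bsub>G\<lparr>carrier := H\<rparr>\<^esub> a)
              | a. a \<in> H \<and> (\<exists>n::int. a [^]\<^bsub>G\<lparr>carrier := H\<rparr>\<^esub> n = g)} = \<infinity>"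
proof (rule Sup_ereal_eq_PInfty_if_dominated[OF assms(4)])
  interpret K: normal K G by (rule assms(2))
  show "0 < real (card (rcosets H))" using card_rcosets_pos[OF assms(1)] by simp
  fix x assume "x \<in> {elem_order (G Mod K) (K #> a) | a. a \<in> carrier G \<and> (\<exists>n::int. a [^] n = g)}"
  then obtain a m where a: "a \<in> carrier G" "a [^] (m::int) = g"
    and x: "x = elem_order (G Mod K) (K #> a)"
    by blast
  obtain d and k :: int where d: "0 < d" "d \<le> card (rcosets H)" "a [^] d \<in> H"
    and root: "(a [^] d) [^] k = g"
    using root_in_finite_index_normal_subgroup[OF assms(1) a assms(3)] by blast
  define y where "y = elem_order (G\<lparr>carrier := H\<rparr> Mod (H \<inter> K))
                               ((H \<inter> K) #>\<^bsub>G\<lparr>carrier := H\<rparr>\<^esub> (a [^] d))"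
  have "x \<le> ereal (real d) * elem_order (G Mod K) ((K #> a) [^]\<^bsub>G Mod K\<^esub> d)"
    unfolding x using group.elem_order_le_mult_elem_order_pow[OF K.factorgroup_is_group
        hom_in_carrier[OF K.r_coset_hom_Mod a(1)] d(1)] .
  also have "\<dots> = ereal (real d) * y"
    unfolding y_def elem_order_def K.FactGroup_pow[OF a(1)]
    using ord_FactGroup_Int_subgroup[OF subgroup_axioms assms(2) d(3)] by simp
  also have "\<dots> \<le> ereal (real (card (rcosets H))) * y"
    using d(2) by (intro ereal_mult_right_mono) (auto simp: y_def elem_order_def)
  finally have "x \<le> ereal (real (card (rcosets H))) * y" .
  moreover have "(a [^] d) [^]\<^bsub>G\<lparr>carrier := H\<rparr>\<^esub> k = g"
    using int_pow_consistent[OF subgroup_axioms d(3)] root by simp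
  ultimately show "\<exists>y\<in>{elem_order (G\<lparr>carrier := H\<rparr> Mod (H \<inter> K)) ((H \<inter> K) #>\<^bsub>G\<lparr>carrier := H\<rparr>\<^esub> a)
              | a. a \<in> H \<and> (\<exists>n::int. a [^]\<^bsub>G\<lparr>carrier := H\<rparr>\<^esub> n = g)}.
      x \<le> ereal (real (card (rcosets H))) * y"
    using d(3) unfolding y_def by blast
qed

theorem mainTheorem12:
  fixes G :: "('a, 'b) monoid_scheme" and H K :: "'a set" and g :: 'a
  assumes "group G"
    and "H \<lhd> G"
    and "finite (rcosets\<^bsub>G\<^esub> H)"
    and "K \<lhd> G"
    and "g \<in> H"
    and "nu G K g = \<infinity>"
  shows "nu (G\<lparr>carrier := H\<rparr>) (H \<inter> K) g = \<infinity>"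
proof -
  interpret normal H G by (rule assms(2))
  show ?thesis
  proof (cases "g \<in> K")
    case True
    then show ?thesis
      using Sup_root_orders_in_subgroup[OF assms(3,4,5)] assms(5,6) unfolding nu_def by simp
  next
    case False
    then show ?thesis
      using Sup_root_exponents_in_subgroup[OF assms(3,5)] assms(6) unfolding nu_def by simp
  qed
qed

end
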